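(* Let $K\ge1$, $T\ge1$ and $\ell_1,\dots,\ell_T\in[0,1]^K$. AdaHedge's cumulative mixability gap satisfies \[ \big(\Delta^{\mathrm{ah}}_T\big)^2\le V^{\mathrm{ah}}_T\ln K+\big(1+\tfrac23\ln K\big)\Delta^{\mathrm{ah}}_T. \]
   Context: Hedge setting: $K$ experts; in round $t$ the learner chooses a probability vector $w_t$, then $\ell_t$ is revealed and the learner suffers $h_t=\sum_kw_{t,k}\ell_{t,k}$. Write $L_{t,k}=\sum_{s=1}^t\ell_{s,k}$ ($L_{0,k}=0$), $L^*_t=\min_kL_{t,k}$. Exponential weights with learning rate $\eta\in(0,\infty]$ at time $t$: $w_{t,k}=e^{-\eta L_{t-1,k}}/\sum_je^{-\eta L_{t-1,j}}$ if $\eta<\infty$; for $\eta=\infty$, $w_t$ uniform on $\{k:L_{t-1,k}=L^*_{t-1}\}$. With learning rate $\eta_t$ in round $t$: mix loss $m_t=-\frac1{\eta_t}\ln\sum_kw_{t,k}e^{-\eta_t\ell_{t,k}}$ if $\eta_t<\infty$, $m_t=L^*_t-L^*_{t-1}$ if $\eta_t=\infty$; mixability gap $\delta_t=h_t-m_t$; loss variance $v_t=\sum_kw_{t,k}(\ell_{t,k}-h_t)^2$. AdaHedge: $\Delta^{\mathrm{ah}}_0=0$; in round $t$, $\eta^{\mathrm{ah}}_t=\ln K/\Delta^{\mathrm{ah}}_{t-1}$ ($=\infty$ if $\Delta^{\mathrm{ah}}_{t-1}=0$), weights are exponential weights with learning rate $\eta^{\mathrm{ah}}_t$ from $L_{t-1}$,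 and $\Delta^{\mathrm{ah}}_t=\Delta^{\mathrm{ah}}_{t-1}+\delta^{\mathrm{ah}}_t$. $V^{\mathrm{ah}}_T=\sum_{t\le T}v^{\mathrm{ah}}_t$. *)

theory Defs
  imports "HOL-Analysis.Analysis" "HOL-Library.Extended_Real"
begin

text \<open>Experts are indexed by {..<K}; the loss of expert k in round t (t \<ge> 1) is l t k.\<close>

definition cumL :: "(nat \<Rightarrow> nat \<Rightarrow> real) \<Rightarrow> nat \<Rightarrow> nat \<Rightarrow> real" where
  "cumL l t k = (\<Sum>s\<in>{1..t}. l s k)"

definition Lstar :: "nat \<Rightarrow> (nat \<Rightarrow> nat \<Rightarrow> real) \<Rightarrow> nat \<Rightarrow> real" where
  "Lstar K l t = Min ((\<lambda>k. cumL l t k) ` {..<K})"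

definition expw :: "nat \<Rightarrow> (nat \<Rightarrow> nat \<Rightarrow> real) \<Rightarrow> ereal \<Rightarrow> nat \<Rightarrow> nat \<Rightarrow> real" where
  "expw K l eta t k =
     (if eta = \<infinity> then
        (if cumL l (t - 1) k = Lstar K l (t - 1)
         then 1 / real (card {j\<in>{..<K}. cumL l (t - 1) j = Lstar K l (t - 1)}) else 0)
      else exp (- real_of_ereal eta * cumL l (t - 1) k)
           / (\<Sum>j<K. exp (- real_of_ereal eta * cumL l (t - 1) j)))"

definition hloss :: "nat \<Rightarrow> (nat \<Rightarrow> nat \<Rightarrow> real) \<Rightarrow> ereal \<Rightarrow> nat \<Rightarrow> real" where
  "hloss K l eta t = (\<Sum>k<K. expw K l eta t k * l t k)"

definition mixloss :: "nat \<Rightarrow> (nat \<Rightarrow> nat \<Rightarrow> real) \<Rightarrow> ereal \<Rightarrow> nat \<Rightarrow> real" where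
  "mixloss K l eta t =
     (if eta = \<infinity> then Lstar K l t - Lstar K l (t - 1)
      else - (1 / real_of_ereal eta) *
             ln (\<Sum>k<K. expw K l eta t k * exp (- real_of_ereal eta * l t k)))"

definition mixgap :: "nat \<Rightarrow> (nat \<Rightarrow> nat \<Rightarrow> real) \<Rightarrow> ereal \<Rightarrow> nat \<Rightarrow> real" where
  "mixgap K l eta t = hloss K l eta t - mixloss K l eta t"

definition lossvar :: "nat \<Rightarrow> (nat \<Rightarrow> nat \<Rightarrow> real) \<Rightarrow> ereal \<Rightarrow> nat \<Rightarrow> real" where
  "lossvar K l eta t = (\<Sum>k<K. expw K l eta t k * (l t k - hloss K l eta t)^2)"

definition ah_rate :: "nat \<Rightarrow> real \<Rightarrow> ereal" where
  "ah_rate K D = (if D = 0 then \<infinity> else ereal (ln (real K) / D))"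

fun ah_Delta :: "nat \<Rightarrow> (nat \<Rightarrow> nat \<Rightarrow> real) \<Rightarrow> nat \<Rightarrow> real" where
  "ah_Delta K l 0 = 0"
| "ah_Delta K l (Suc t) =
     ah_Delta K l t + mixgap K l (ah_rate K (ah_Delta K l t)) (Suc t)"

definition ah_V :: "nat \<Rightarrow> (nat \<Rightarrow> nat \<Rightarrow> real) \<Rightarrow> nat \<Rightarrow> real" where
  "ah_V K l T = (\<Sum>t\<in>{1..T}. lossvar K l (ah_rate K (ah_Delta K l (t - 1))) t)"

end

theory Submission
  imports Defs
begin

text \<open>
  In each round the mixability gap \<open>\<delta>\<close> lies in \<open>[0,1]\<close>, and for a finite learning rate
  \<open>\<eta>\<close> a Bernstein-type estimate gives \<open>(1 - \<eta>/3) \<delta> \<le> \<eta> v / 2\<close>; it comes from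
  \<open>(1 - \<eta>/3) (e\<^sup>x - 1 - x) \<le> x\<^sup>2/2\<close> for \<open>x \<le> \<eta>\<close>, applied to the centred losses. For AdaHedge
  \<open>\<eta> = ln K / \<Delta>\<close> with \<open>\<Delta>\<close> the gap accumulated so far, so the estimate reads
  \<open>2 \<delta> \<Delta> \<le> v ln K + (2/3) \<delta> ln K\<close>. Since \<open>(\<Delta> + \<delta>)\<^sup>2 = \<Delta>\<^sup>2 + 2 \<delta> \<Delta> + \<delta>\<^sup>2\<close> and
  \<open>\<delta>\<^sup>2 \<le> \<delta>\<close>, summing these increments over the rounds yields the claim.
\<close>

section \<open>An exponential inequality\<close>

lemma one_minus_exp_plus_mult_exp_nonneg: "0 \<le> 1 - exp x + x * exp (x::real)"
proof -
  have "0 \<le> exp x * (exp (- x) - (1 - x))"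
    using exp_ge_add_one_self[of "- x"] by simp
  also have "\<dots> = 1 - exp x + x * exp x"
    by (simp add: algebra_simps exp_minus)
  finally show ?thesis .
qed

lemma exp_remainder_deriv_nonneg:
  assumes "0 \<le> (x::real)"
  shows "0 \<le> x/3 + 2/3 - 2/3 * exp x + x * exp x / 3"
proof -
  let ?p = "\<lambda>x::real. x/3 + 2/3 - 2/3 * exp x + x * exp x / 3"
  have "?p 0 \<le> ?p x"
  proof (rule DERIV_nonneg_imp_nondecreasing[OF assms])
    fix y :: real
    show "\<exists>d. (?p has_real_derivative d) (at y) \<and> 0 \<le> d"
      using one_minus_exp_plus_mult_exp_nonneg[of y]
      by (intro exI[of _ "(1 - exp y + y * exp y) / 3"])
         (auto intro!: derivative_eq_intros simp: algebra_simps)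
  qed
  then show ?thesis by simp
qed

lemma exp_remainder_le_nonneg:
  assumes "0 \<le> (x::real)"
  shows "(1 - x/3) * (exp x - 1 - x) \<le> x\<^sup>2 / 2"
proof -
  let ?f = "\<lambda>x::real. x\<^sup>2 / 2 - (1 - x/3) * (exp x - 1 - x)"
  have "?f 0 \<le> ?f x"
  proof (rule DERIV_nonneg_imp_nondecreasing[OF assms])
    fix y :: real assume "0 \<le> y"
    show "\<exists>d. (?f has_real_derivative d) (at y) \<and> 0 \<le> d"
      using exp_remainder_deriv_nonneg[OF \<open>0 \<le> y\<close>]
      by (intro exI[of _ "y/3 + 2/3 - 2/3 * exp y + y * exp y / 3"])
         (auto intro!: derivative_eq_intros simp: field_simps power2_eq_square)
  qed
  then show ?thesis by simp
qed

lemma exp_remainder_le_nonpos: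
  assumes "x \<le> (0::real)"
  shows "exp x - 1 - x \<le> x\<^sup>2 / 2"
proof -
  let ?f = "\<lambda>x::real. exp x - 1 - x - x\<^sup>2 / 2"
  have "?f x \<le> ?f 0"
  proof (rule DERIV_nonneg_imp_nondecreasing[OF assms])
    fix y :: real
    show "\<exists>d. (?f has_real_derivative d) (at y) \<and> 0 \<le> d"
      using exp_ge_add_one_self[of y]
      by (intro exI[of _ "exp y - 1 - y"])
         (auto intro!: derivative_eq_intros simp: algebra_simps power2_eq_square)
  qed
  then show ?thesis by simp
qed

lemma exp_remainder_le:
  assumes "0 \<le> \<eta>" and "x \<le> (\<eta>::real)"
  shows "(1 - \<eta>/3) * (exp x - 1 - x) \<le> x\<^sup>2 / 2"
proof -
  have rem: "0 \<le> exp x - 1 - x"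
    using exp_ge_add_one_self[of x] by linarith
  show ?thesis
  proof (cases "0 \<le> x")
    case True
    have "(1 - \<eta>/3) * (exp x - 1 - x) \<le> (1 - x/3) * (exp x - 1 - x)"
      using assms rem by (intro mult_right_mono) auto
    with exp_remainder_le_nonneg[OF True] show ?thesis by linarith
  next
    case False
    have "(1 - \<eta>/3) * (exp x - 1 - x) \<le> exp x - 1 - x"
      using assms rem mult_right_mono[of "1 - \<eta>/3" 1 "exp x - 1 - x"] by simp
    with exp_remainder_le_nonpos[of x] False show ?thesis by linarith
  qed
qed

section \<open>Mix loss and mixability gap of a finite distribution\<close>

locale prob_vector =
  fixes A :: "'a set" and w :: "'a \<Rightarrow> real"
  assumes weight_nonneg: "k \<in> A \<Longrightarrow> 0 \<le> w k"
    and weights_sum: "sum w A = 1"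
begin

definition mean :: "('a \<Rightarrow> real) \<Rightarrow> real" where
  "mean x = (\<Sum>k\<in>A. w k * x k)"

definition mix_loss :: "real \<Rightarrow> ('a \<Rightarrow> real) \<Rightarrow> real" where
  "mix_loss \<eta> x = - (1 / \<eta>) * ln (mean (\<lambda>k. exp (- \<eta> * x k)))"

definition variance :: "('a \<Rightarrow> real) \<Rightarrow> real" where
  "variance x = mean (\<lambda>k. (x k - mean x)\<^sup>2)"

lemma mean_const [simp]: "mean (\<lambda>_. c) = c"
  unfolding mean_def using weights_sum by (simp add: sum_distrib_right[symmetric])

lemma mean_add: "mean (\<lambda>k. x k + y k) = mean x + mean y"
  unfolding mean_def by (simp add: distrib_left sum.distrib)

lemma mean_diff: "mean (\<lambda>k. x k - y k) = mean x - mean y"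
  unfolding mean_def by (simp add: right_diff_distrib sum_subtractf)

lemma mean_scale: "mean (\<lambda>k. c * x k) = c * mean x"
  unfolding mean_def by (simp add: sum_distrib_left mult.left_commute)

lemma mean_mono: "(\<And>k. k \<in> A \<Longrightarrow> x k \<le> y k) \<Longrightarrow> mean x \<le> mean y"
  unfolding mean_def by (intro sum_mono mult_left_mono) (auto simp: weight_nonneg)

lemma mean_le: "(\<And>k. k \<in> A \<Longrightarrow> x k \<le> c) \<Longrightarrow> mean x \<le> c"
  using mean_mono[of x "\<lambda>_. c"] by simp

lemma mean_ge: "(\<And>k. k \<in> A \<Longrightarrow> c \<le> x k) \<Longrightarrow> c \<le> mean x"
  using mean_mono[of "\<lambda>_. c" x] by simp

lemma mean_centered: "mean (\<lambda>k. mean x - x k) = 0"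
  by (simp add: mean_diff)

lemma mean_exp_factor:
  "mean (\<lambda>k. exp (- \<eta> * x k)) = exp (- \<eta> * mean x) * mean (\<lambda>k. exp (\<eta> * (mean x - x k)))"
proof -
  have "exp (- \<eta> * x k) = exp (- \<eta> * mean x) * exp (\<eta> * (mean x - x k))" for k
    by (simp add: mult_exp_exp algebra_simps)
  then show ?thesis by (simp add: mean_scale)
qed

lemma one_le_mean_exp_centered: "1 \<le> mean (\<lambda>k. exp (\<eta> * (mean x - x k)))"
proof -
  have "mean (\<lambda>k. 1 + \<eta> * (mean x - x k)) = 1"
    by (simp add: mean_add mean_scale mean_centered)
  moreover have "mean (\<lambda>k. 1 + \<eta> * (mean x - x k)) \<le> mean (\<lambda>k. exp (\<eta> * (mean x - x k)))"
    by (intro mean_mono exp_ge_add_one_self)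
  ultimately show ?thesis by simp
qed

lemma mix_gap_eq_ln:
  assumes "\<eta> \<noteq> 0"
  shows "mean x - mix_loss \<eta> x = ln (mean (\<lambda>k. exp (\<eta> * (mean x - x k)))) / \<eta>"
proof -
  have "0 < mean (\<lambda>k. exp (\<eta> * (mean x - x k)))"
    using one_le_mean_exp_centered[of \<eta> x] by linarith
  then show ?thesis
    using assms unfolding mix_loss_def mean_exp_factor by (simp add: ln_mult field_simps)
qed

lemma mix_gap_nonneg: "0 < \<eta> \<Longrightarrow> 0 \<le> mean x - mix_loss \<eta> x"
  using one_le_mean_exp_centered[of \<eta> x] by (simp add: mix_gap_eq_ln)

lemma mix_loss_nonneg:
  assumes "0 < \<eta>" and "\<And>k. k \<in> A \<Longrightarrow> 0 \<le> x k"
  shows "0 \<le> mix_loss \<eta> x"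
proof -
  let ?S = "mean (\<lambda>k. exp (- \<eta> * x k))"
  have "0 < ?S"
    using one_le_mean_exp_centered[of \<eta> x] unfolding mean_exp_factor
    by (simp add: zero_less_mult_iff)
  moreover have "?S \<le> 1"
    using assms by (intro mean_le) simp
  ultimately show ?thesis
    using assms(1) unfolding mix_loss_def by (simp add: divide_nonpos_pos)
qed

lemma mix_gap_le_one:
  assumes "0 < \<eta>" and "\<And>k. k \<in> A \<Longrightarrow> 0 \<le> x k \<and> x k \<le> 1"
  shows "mean x - mix_loss \<eta> x \<le> 1"
  using mix_loss_nonneg[of \<eta> x] mean_le[of x 1] assms by force

lemma mean_exp_centered_bernstein:
  assumes "0 \<le> \<eta>" and x: "\<And>k. k \<in> A \<Longrightarrow> 0 \<le> x k \<and> x k \<le> 1"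
  shows "(1 - \<eta>/3) * (mean (\<lambda>k. exp (\<eta> * (mean x - x k))) - 1) \<le> \<eta>\<^sup>2 / 2 * variance x"
proof -
  define y where "y k = \<eta> * (mean x - x k)" for k
  have "mean y = 0"
    unfolding y_def by (simp add: mean_scale mean_centered)
  then have "mean (\<lambda>k. exp (y k)) - 1 = mean (\<lambda>k. exp (y k) - 1 - y k)"
    by (simp add: mean_diff)
  then have "(1 - \<eta>/3) * (mean (\<lambda>k. exp (y k)) - 1) = mean (\<lambda>k. (1 - \<eta>/3) * (exp (y k) - 1 - y k))"
    by (simp add: mean_scale)
  also have "\<dots> \<le> mean (\<lambda>k. (y k)\<^sup>2 / 2)"
  proof (rule mean_mono)
    fix k assume "k \<in> A"
    have "mean x \<le> 1"
      using x by (intro mean_le) auto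
    then have "mean x - x k \<le> 1"
      using x[OF \<open>k \<in> A\<close>] by linarith
    then have "y k \<le> \<eta>"
      unfolding y_def using assms(1) by (simp add: mult_left_le)
    then show "(1 - \<eta>/3) * (exp (y k) - 1 - y k) \<le> (y k)\<^sup>2 / 2"
      using exp_remainder_le assms(1) by blast
  qed
  also have "\<dots> = mean (\<lambda>k. \<eta>\<^sup>2 / 2 * (x k - mean x)\<^sup>2)"
    unfolding y_def by (simp add: power_mult_distrib power2_commute)
  also have "\<dots> = \<eta>\<^sup>2 / 2 * variance x"
    unfolding variance_def by (rule mean_scale)
  finally show ?thesis unfolding y_def .
qed

lemma mix_gap_bernstein:
  assumes "0 < \<eta>" and x: "\<And>k. k \<in> A \<Longrightarrow> 0 \<le> x k \<and> x k \<le> 1"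
  shows "(1 - \<eta>/3) * (mean x - mix_loss \<eta> x) \<le> \<eta> * variance x / 2"
proof (cases "\<eta> < 3")
  case False
  have "(1 - \<eta>/3) * (mean x - mix_loss \<eta> x) \<le> 0"
    using False mix_gap_nonneg[OF assms(1)] by (intro mult_nonpos_nonneg) auto
  moreover have "0 \<le> \<eta> * variance x"
    unfolding variance_def using assms(1) by (simp add: mean_ge)
  ultimately show ?thesis by linarith
next
  case True
  let ?R = "mean (\<lambda>k. exp (\<eta> * (mean x - x k)))"
  have "0 < ?R"
    using one_le_mean_exp_centered[of \<eta> x] by linarith
  then have "(1 - \<eta>/3) * ln ?R \<le> (1 - \<eta>/3) * (?R - 1)"
    using True by (intro mult_left_mono ln_le_minus_one) auto
  also have "\<dots> \<le> \<eta>\<^sup>2 / 2 * variance x"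
    using mean_exp_centered_bernstein assms by simp
  finally have "(1 - \<eta>/3) * ln ?R / \<eta> \<le> \<eta>\<^sup>2 / 2 * variance x / \<eta>"
    using assms(1) by (intro divide_right_mono) auto
  then show ?thesis
    using assms(1) by (simp add: mix_gap_eq_ln power2_eq_square)
qed

end

section \<open>Hedge with a finite learning rate\<close>

lemma expw_finite_rate:
  "expw K l (ereal e) t k = exp (- e * cumL l (t - 1) k) / (\<Sum>j<K. exp (- e * cumL l (t - 1) j))"
  unfolding expw_def by simp

lemma prob_vector_expw:
  assumes "K \<ge> 1"
  shows "prob_vector {..<K} (expw K l (ereal e) t)"
proof
  have "0 < (\<Sum>j<K. exp (- e * cumL l (t - 1) j))"
    using assms by (intro sum_pos) (auto simp: lessThan_empty_iff)
  then show "sum (expw K l (ereal e) t) {..<K} = 1"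
    unfolding expw_finite_rate by (simp add: sum_divide_distrib[symmetric])
qed (auto simp: expw_finite_rate intro!: divide_nonneg_nonneg sum_nonneg)

lemma mixgap_finite_rate_bounds:
  assumes "K \<ge> 1" and "0 < e" and l: "\<And>k. k < K \<Longrightarrow> 0 \<le> l t k \<and> l t k \<le> 1"
  shows "0 \<le> mixgap K l (ereal e) t" and "mixgap K l (ereal e) t \<le> 1"
    and "(1 - e/3) * mixgap K l (ereal e) t \<le> e * lossvar K l (ereal e) t / 2"
proof -
  interpret W: prob_vector "{..<K}" "expw K l (ereal e) t"
    using prob_vector_expw[OF assms(1)] .
  have gap: "mixgap K l (ereal e) t = W.mean (l t) - W.mix_loss e (l t)"
    unfolding mixgap_def hloss_def mixloss_def W.mix_loss_def W.mean_def by simp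
  have var: "lossvar K l (ereal e) t = W.variance (l t)"
    unfolding lossvar_def hloss_def W.variance_def W.mean_def by simp
  show "0 \<le> mixgap K l (ereal e) t" and "mixgap K l (ereal e) t \<le> 1"
    and "(1 - e/3) * mixgap K l (ereal e) t \<le> e * lossvar K l (ereal e) t / 2"
    unfolding gap var using W.mix_gap_nonneg W.mix_gap_le_one W.mix_gap_bernstein assms l by auto
qed

section \<open>Hedge with an infinite learning rate\<close>

lemma cumL_Suc: "cumL l (Suc s) k = cumL l s k + l (Suc s) k"
  unfolding cumL_def by (simp add: sum.cl_ivl_Suc)

lemma Lstar_le_cumL: "k < K \<Longrightarrow> Lstar K l s \<le> cumL l s k"
  unfolding Lstar_def by (rule Min_le) auto

lemma Lstar_attained:
  assumes "K \<ge> 1"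
  obtains k where "k < K" and "Lstar K l s = cumL l s k"
proof -
  have "Lstar K l s \<in> (\<lambda>k. cumL l s k) ` {..<K}"
    unfolding Lstar_def using assms by (intro Min_in) (auto simp: lessThan_empty_iff)
  then show ?thesis using that by auto
qed

lemma Lstar_Suc_diff_le_leader_loss:
  assumes "k < K" and "cumL l s k = Lstar K l s"
  shows "Lstar K l (Suc s) - Lstar K l s \<le> l (Suc s) k"
  using Lstar_le_cumL[OF assms(1), of l "Suc s"] assms(2) by (simp add: cumL_Suc)

lemma Lstar_Suc_ge:
  assumes "K \<ge> 1" and "\<And>k. k < K \<Longrightarrow> 0 \<le> l (Suc s) k"
  shows "Lstar K l s \<le> Lstar K l (Suc s)"
proof -
  obtain k where "k < K" "Lstar K l (Suc s) = cumL l (Suc s) k"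
    using Lstar_attained[OF assms(1)] .
  then show ?thesis
    using Lstar_le_cumL[of k K l s] assms(2)[of k] by (simp add: cumL_Suc)
qed

lemma hloss_infinite_rate:
  fixes K s :: nat and l :: "nat \<Rightarrow> nat \<Rightarrow> real"
  defines "N \<equiv> {j\<in>{..<K}. cumL l s j = Lstar K l s}"
  shows "hloss K l \<infinity> (Suc s) = (\<Sum>k\<in>N. l (Suc s) k) / card N"
proof -
  have "hloss K l \<infinity> (Suc s) = (\<Sum>k<K. if k \<in> N then l (Suc s) k / card N else 0)"
    unfolding hloss_def expw_def N_def by (intro sum.cong) auto
  also have "\<dots> = (\<Sum>k\<in>N. l (Suc s) k / card N)"
    unfolding N_def by (simp add: sum.inter_filter[symmetric])
  finally show ?thesis by (simp add: sum_divide_distrib)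
qed

lemma mixgap_infinite_rate_bounds:
  assumes "K \<ge> 1" and "t \<ge> 1" and l: "\<And>k. k < K \<Longrightarrow> 0 \<le> l t k \<and> l t k \<le> 1"
  shows "0 \<le> mixgap K l \<infinity> t \<and> mixgap K l \<infinity> t \<le> 1"
proof -
  obtain s where t: "t = Suc s" using assms(2) by (cases t) auto
  define N where "N = {j\<in>{..<K}. cumL l s j = Lstar K l s}"
  define jump where "jump = Lstar K l t - Lstar K l s"
  obtain k0 where "k0 < K" "Lstar K l s = cumL l s k0"
    using Lstar_attained[OF assms(1)] .
  then have "k0 \<in> N" unfolding N_def by simp
  then have card_pos: "0 < card N" unfolding N_def by (auto simp: card_gt_0_iff)
  have "card N * jump \<le> (\<Sum>k\<in>N. l t k)"
    using sum_mono[of N "\<lambda>_. jump" "l t"] Lstar_Suc_diff_le_leader_loss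
    unfolding N_def jump_def t by auto
  then have "jump \<le> (\<Sum>k\<in>N. l t k) / card N"
    using card_pos by (simp add: field_simps)
  moreover have "(\<Sum>k\<in>N. l t k) / card N \<le> 1"
    using sum_mono[of N "l t" "\<lambda>_. 1"] l card_pos unfolding N_def by auto
  moreover have "0 \<le> jump"
    using Lstar_Suc_ge[OF assms(1)] l unfolding jump_def t by simp
  moreover have "mixgap K l \<infinity> t = (\<Sum>k\<in>N. l t k) / card N - jump"
    unfolding mixgap_def mixloss_def jump_def N_def t hloss_infinite_rate by simp
  ultimately show ?thesis by linarith
qed

section \<open>AdaHedge\<close>

lemma ah_Delta_single_expert: "ah_Delta 1 l t = 0"
proof (induction t)
  case (Suc t)
  have leaders: "{j\<in>{..<1}. cumL l t j = Lstar 1 l t} = {0}"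
    and Lstar_one: "Lstar 1 l s = cumL l s 0" for s
    by (auto simp: Lstar_def lessThan_Suc)
  have "hloss 1 l \<infinity> (Suc t) = l (Suc t) 0"
    unfolding hloss_infinite_rate leaders by simp
  moreover have "mixloss 1 l \<infinity> (Suc t) = l (Suc t) 0"
    unfolding mixloss_def Lstar_one by (simp add: cumL_Suc)
  ultimately show ?case
    using Suc by (simp add: mixgap_def ah_rate_def)
qed simp

lemma lossvar_nonneg: "0 \<le> lossvar K l eta t"
  unfolding lossvar_def expw_def by (auto intro!: sum_nonneg divide_nonneg_nonneg)

lemma ah_V_Suc: "ah_V K l (Suc n) = ah_V K l n + lossvar K l (ah_rate K (ah_Delta K l n)) (Suc n)"
  unfolding ah_V_def by (simp add: sum.cl_ivl_Suc)

lemma ah_mixgap_bounds: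
  assumes "K \<ge> 2" and "t \<ge> 1" and l: "\<And>k. k < K \<Longrightarrow> 0 \<le> l t k \<and> l t k \<le> 1" and "0 \<le> D"
  defines "\<delta> \<equiv> mixgap K l (ah_rate K D) t" and "v \<equiv> lossvar K l (ah_rate K D) t"
  shows "0 \<le> \<delta>" and "\<delta> \<le> 1" and "2 * \<delta> * D \<le> v * ln K + 2/3 * ln K * \<delta>"
proof -
  have "0 < ln (real K)" and "0 \<le> v"
    using assms(1) by (simp_all add: v_def lossvar_nonneg)
  have "0 \<le> \<delta> \<and> \<delta> \<le> 1 \<and> 2 * \<delta> * D \<le> v * ln K + 2/3 * ln K * \<delta>"
  proof (cases "D = 0")
    case True
    then show ?thesis
      using mixgap_infinite_rate_bounds[of K t l] assms \<open>0 \<le> v\<close> \<open>0 < ln K\<close>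
      by (simp add: \<delta>_def ah_rate_def)
  next
    case False
    define e where "e = ln K / D"
    have "0 < e" and lnK: "ln K = e * D"
      using False \<open>0 \<le> D\<close> \<open>0 < ln K\<close> by (simp_all add: e_def)
    have rate: "ah_rate K D = ereal e"
      using False by (simp add: ah_rate_def e_def)
    note gap = mixgap_finite_rate_bounds[of K e l t, OF _ \<open>0 < e\<close> l, folded rate, folded \<delta>_def v_def]
    have "(1 - e/3) * \<delta> * (2 * D) \<le> e * v / 2 * (2 * D)"
      using gap(3) assms(1,4) by (intro mult_right_mono) auto
    then have "2 * \<delta> * D \<le> v * (e * D) + 2/3 * (e * D) * \<delta>"
      by (simp add: algebra_simps)
    then show ?thesis
      using gap(1,2) assms(1) unfolding lnK by simp
  qed
  then show "0 \<le> \<delta>" and "\<delta> \<le> 1" and "2 * \<delta> * D \<le> v * ln K + 2/3 * ln K * \<delta>"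
    by auto
qed

lemma quadratic_bound_step:
  fixes D V \<delta> v c :: real
  assumes "D\<^sup>2 \<le> V * c + (1 + 2/3 * c) * D"
    and "0 \<le> \<delta>" and "\<delta> \<le> 1" and "2 * \<delta> * D \<le> v * c + 2/3 * c * \<delta>"
  shows "(D + \<delta>)\<^sup>2 \<le> (V + v) * c + (1 + 2/3 * c) * (D + \<delta>)"
proof -
  have "\<delta>\<^sup>2 \<le> \<delta>"
    using assms(2,3) by (simp add: power2_eq_square mult_left_le)
  moreover have "(D + \<delta>)\<^sup>2 = D\<^sup>2 + 2 * \<delta> * D + \<delta>\<^sup>2"
    by (simp add: power2_sum)
  ultimately show ?thesis
    using assms(1,4) by (simp add: distrib_left distrib_right)
qed

theorem lemma5:
  fixes K T :: nat and l :: "nat \<Rightarrow> nat \<Rightarrow> real"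
  assumes "K \<ge> 1" and "T \<ge> 1"
    and "\<And>t k. t \<in> {1..T} \<Longrightarrow> k < K \<Longrightarrow> 0 \<le> l t k \<and> l t k \<le> 1"
  shows "(ah_Delta K l T)^2 \<le> ah_V K l T * ln (real K) + (1 + 2/3 * ln (real K)) * ah_Delta K l T"
proof (cases "K = 1")
  case True
  then show ?thesis unfolding True ah_Delta_single_expert by simp
next
  case False
  with assms(1) have "K \<ge> 2" by simp
  have "0 \<le> ah_Delta K l n \<and>
      (ah_Delta K l n)\<^sup>2 \<le> ah_V K l n * ln K + (1 + 2/3 * ln K) * ah_Delta K l n"
    if "n \<le> T" for n
    using that
  proof (induction n)
    case (Suc n)
    then have IH: "0 \<le> ah_Delta K l n"
      "(ah_Delta K l n)\<^sup>2 \<le> ah_V K l n * ln K + (1 + 2/3 * ln K) * ah_Delta K l n"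
      by auto
    have "1 \<le> Suc n" and l: "\<And>k. k < K \<Longrightarrow> 0 \<le> l (Suc n) k \<and> l (Suc n) k \<le> 1"
      using assms(3) Suc.prems by auto
    note step = ah_mixgap_bounds[of K "Suc n" l, OF \<open>K \<ge> 2\<close> \<open>1 \<le> Suc n\<close> l IH(1)]
    show ?case
      using IH(1) step(1) quadratic_bound_step[OF IH(2) step] by (simp add: ah_V_Suc)
  qed (simp add: ah_V_def)
  then show ?thesis by simp
qed

end
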